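(* Consider the downtown bathtub model described in the context, with a fixed number $N_s>0$ of suburban commuters, and let $C_s^{b*}$ be the equilibrium bathtub cost of a short-run equilibrium. Put $\theta \equiv \frac{C_s^{b*} v_f}{\alpha L}$. Then (i) $\theta$ satisfies $$F(\theta)\equiv N_s-\alpha n_j\left(\frac{1}{\beta}+\frac{1}{\gamma}\right)\left(\ln\theta+\frac{1}{\theta}-1\right)=0;$$ (ii) hypercongestion exists at the equilibrium if $\theta>2$.
   Context: Downtown traffic (bathtub model): the vehicle accumulation $n(t)\ge 0$ in the downtown area at time $t$ evolves as $\dot n(t)=I(t)-G(t)$, where $I(t)$ is the inflow and $G(t)=n(t)v(t)/L$ is the outflow, $L>0$ is the (common) trip length in the downtown area, and the space-mean speed follows the Greenshields law $v(t)=v_f\left(1-\frac{n(t)}{n_j}\right)$ with free-flow speed $v_f>0$ and jam accumulation $n_j>0$. The downtown travel time of a commuter arriving at work at time $t$ is $T(t)=L/v(t)$. A suburban commuter who arrives at work at time $t$ incurs the bathtub cost $C_s^b(t)=\alpha T(t)+s(t)$, where $s(t)=\beta(t^*-t)$ if $t\le t^*$ and $s(t)=\gamma(t-t^* )$ if $t>t^*$; here $\alpha,\beta,\gamma>0$ are the marginal costs of travel time, earliness and lateness, and $t^*$ is the desired arrival time. A short-run equilibrium (with $N_s$ fixed) is an accumulation path $n(\cdot)$ together with a number $C_s^{b*}$ such that $C_s^b(t)=C_s^{b*}$ for all $t$ with $n(t)>0$, $C_s^b(t)\ge C_s^{b*}$ for all $t$ with $n(t)=0$, and $\int_{\mathbb{R}}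 \frac{n(t)v(t)}{L}\,dt=N_s$. Hypercongestion means that the accumulation exceeds the critical accumulation $n_j/2$ (the accumulation maximizing the outflow $n v/L$) at some time. *)

theory Defs
  imports "HOL-Analysis.Analysis"
begin

definition speed :: "real \<Rightarrow> real \<Rightarrow> real \<Rightarrow> real" where
  "speed vf nj n = vf * (1 - n / nj)"

definition travel_time :: "real \<Rightarrow> real \<Rightarrow> real \<Rightarrow> real \<Rightarrow> real" where
  "travel_time L vf nj n = L / speed vf nj n"

definition sched :: "real \<Rightarrow> real \<Rightarrow> real \<Rightarrow> real \<Rightarrow> real" where
  "sched \<beta> \<gamma> tstar t = (if t \<le> tstar then \<beta> * (tstar - t) else \<gamma> * (t - tstar))"

definition bathtub_cost ::
  "real \<Rightarrow> real \<Rightarrow> real \<Rightarrow> real \<Rightarrow> real \<Rightarrow> real \<Rightarrow> real \<Rightarrow> (real \<Rightarrow> real) \<Rightarrow> real \<Rightarrow> real" where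
  "bathtub_cost L vf nj \<alpha> \<beta> \<gamma> tstar n t =
     \<alpha> * travel_time L vf nj (n t) + sched \<beta> \<gamma> tstar t"

text \<open>Short-run equilibrium: accumulation path n (with 0 \<le> n < n_j, so travel time
  is finite) and equilibrium cost C such that the cost equals C whenever n > 0,
  is at least C whenever n = 0, and total outflow equals N_s.\<close>
definition short_run_equilibrium ::
  "real \<Rightarrow> real \<Rightarrow> real \<Rightarrow> real \<Rightarrow> real \<Rightarrow> real \<Rightarrow> real \<Rightarrow> real \<Rightarrow> (real \<Rightarrow> real) \<Rightarrow> real \<Rightarrow> bool" where
  "short_run_equilibrium L vf nj \<alpha> \<beta> \<gamma> tstar Ns n C \<longleftrightarrow>
     (\<forall>t. 0 \<le> n t \<and> n t < nj) \<and>
     (\<forall>t. n t > 0 \<longrightarrow> bathtub_cost L vf nj \<alpha> \<beta> \<gamma> tstar n t = C) \<and>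
     (\<forall>t. n t = 0 \<longrightarrow> bathtub_cost L vf nj \<alpha> \<beta> \<gamma> tstar n t \<ge> C) \<and>
     ((\<lambda>t. n t * speed vf nj (n t) / L) has_integral Ns) UNIV"

text \<open>Hypercongestion: accumulation exceeds the critical accumulation n_j/2 at some time.\<close>
definition hypercongestion :: "real \<Rightarrow> (real \<Rightarrow> real) \<Rightarrow> bool" where
  "hypercongestion nj n \<longleftrightarrow> (\<exists>t. n t > nj / 2)"

end

theory Submission
  imports Defs
begin

text \<open>In equilibrium the travel-time cost \<open>\<alpha> T(t)\<close> of every commuter on the road equals
  \<open>w(t) = C - s(t)\<close>. Inverting the Greenshields law, the accumulation, and hence the outflow,
  at time \<open>t\<close> is a function of \<open>w(t)\<close> alone, vanishing when \<open>w(t)\<close> is below the free-flow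
  cost \<open>a = \<alpha> L / v\<^sub>f\<close>. Since \<open>s\<close> is piecewise linear with slopes \<open>\<beta>\<close> and \<open>\<gamma>\<close>, the
  substitution \<open>w = C - s(t)\<close> turns the total outflow into \<open>(1/\<beta> + 1/\<gamma>)\<close> times an
  elementary integral over \<open>[a, C]\<close>, which gives (i). At \<open>t\<^sup>*\<close> the cost is \<open>w = C\<close>, so
  \<open>n(t\<^sup>*) = n\<^sub>j (1 - 1/\<theta>)\<close>, which exceeds \<open>n\<^sub>j/2\<close> when \<open>\<theta> > 2\<close>.\<close>

text \<open>The argument \<open>w\<close> is a travel-time cost \<open>\<alpha> T\<close>; the parameters are \<open>a = \<alpha> L / v\<^sub>f\<close> and
  \<open>K = n\<^sub>j v\<^sub>f / L\<close>.\<close>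

definition accumulation_of_cost :: "real \<Rightarrow> real \<Rightarrow> real \<Rightarrow> real" where
  "accumulation_of_cost a nj w = (if a \<le> w then nj * (1 - a / w) else 0)"

definition outflow_of_cost :: "real \<Rightarrow> real \<Rightarrow> real \<Rightarrow> real" where
  "outflow_of_cost a K w = (if a \<le> w then K * (a / w - (a / w)\<^sup>2) else 0)"

lemma accumulation_eq_accumulation_of_cost:
  fixes L vf nj \<alpha> m w :: real
  assumes "0 < L" "0 < vf" "0 < nj" "0 < \<alpha>" "0 \<le> m" "m < nj"
    and congested: "0 < m \<Longrightarrow> \<alpha> * travel_time L vf nj m = w"
    and free: "m = 0 \<Longrightarrow> \<alpha> * travel_time L vf nj m \<ge> w"
  shows "m = accumulation_of_cost (\<alpha> * L / vf) nj w"
proof (cases "m = 0")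
  case True
  with free assms(1-4) have "w \<le> \<alpha> * L / vf"
    by (simp add: travel_time_def speed_def)
  with True assms(1-4) show ?thesis by (auto simp: accumulation_of_cost_def)
next
  case False
  define y where "y = 1 - m / nj"
  have y: "0 < y" "y \<le> 1" using assms False by (auto simp: y_def field_simps)
  define b where "b = \<alpha> * L / vf"
  have b: "0 < b" using assms by (simp add: b_def)
  have w: "w = b / y"
    using congested assms False by (simp add: travel_time_def speed_def y_def b_def)
  have "b \<le> w"
    unfolding w using y b mult_left_le[of y b] by (simp add: pos_le_divide_eq)
  moreover have "b / w = y"
    unfolding w using y b by simp
  ultimately show ?thesis using assms(3) by (simp add: accumulation_of_cost_def y_def b_def)
qed

lemma outflow_accumulation_of_cost:
  assumes "nj \<noteq> 0"
  shows "accumulation_of_cost a nj w * speed vf nj (accumulation_of_cost a nj w) / L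
           = outflow_of_cost a (nj * vf / L) w"
proof -
  define x where "x = a / w"
  have "accumulation_of_cost a nj w = (if a \<le> w then nj * (1 - x) else 0)"
    by (simp add: accumulation_of_cost_def x_def)
  moreover have "speed vf nj (nj * (1 - x)) = vf * x"
    using assms by (simp add: speed_def)
  ultimately show ?thesis
    by (simp add: outflow_of_cost_def x_def[symmetric] power2_eq_square algebra_simps)
qed

lemma outflow_of_cost_eq_0: "w \<le> a \<Longrightarrow> outflow_of_cost a K w = 0"
  by (cases "w = a") (auto simp: outflow_of_cost_def)

lemma has_integral_outflow_of_cost:
  assumes "0 < a" "a \<le> C"
  shows "(outflow_of_cost a K has_integral K * a * (ln (C / a) + a / C - 1)) {a..C}"
proof -
  define F where "F w = K * (a * ln w + a\<^sup>2 / w)" for w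
  have "((\<lambda>w. K * (a / w - (a / w)\<^sup>2)) has_integral F C - F a) {a..C}"
  proof (rule fundamental_theorem_of_calculus[OF \<open>a \<le> C\<close>])
    fix w assume "w \<in> {a..C}"
    then have "0 < w" using assms by auto
    then have "(F has_real_derivative K * (a / w - a\<^sup>2 / w\<^sup>2)) (at w)"
      unfolding F_def by (auto intro!: derivative_eq_intros simp: field_simps power2_eq_square)
    then show "(F has_vector_derivative K * (a / w - (a / w)\<^sup>2)) (at w within {a..C})"
      by (simp add: has_real_derivative_iff_has_vector_derivative has_vector_derivative_at_within
          power_divide)
  qed
  also have "F C - F a = K * a * (ln (C / a) + a / C - 1)"
    using assms by (simp add: F_def ln_div field_simps power2_eq_square)
  finally show ?thesis
    by (rule has_integral_eq[rotated]) (simp add: outflow_of_cost_def power_divide)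
qed

lemma has_integral_comp_sched:
  fixes f :: "real \<Rightarrow> real"
  assumes "0 < \<beta>" "0 < \<gamma>" "a \<le> C"
    and f: "(f has_integral I) {a..C}" and f0: "\<And>w. w < a \<Longrightarrow> f w = 0"
  shows "((\<lambda>t. f (C - sched \<beta> \<gamma> tstar t)) has_integral I / \<beta> + I / \<gamma>) UNIV"
proof -
  define t1 t2 where "t1 = tstar - (C - a) / \<beta>" and "t2 = tstar + (C - a) / \<gamma>"
  have "((\<lambda>t. f (\<beta> * t + (C - \<beta> * tstar))) has_integral I / \<beta>) {t1..tstar}"
    using has_integral_affinity_iff[of \<beta> f "C - \<beta> * tstar" I a C] f assms(1)
    by (simp add: t1_def field_simps)
  then have early: "((\<lambda>t. f (C - sched \<beta> \<gamma> tstar t)) has_integral I / \<beta>) {t1..tstar}"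
    by (rule has_integral_eq[rotated]) (simp add: sched_def algebra_simps)
  have "((\<lambda>w. f (- w)) has_integral I) {-C..-a}"
    using f by simp
  then have "((\<lambda>t. f (- (\<gamma> * t - (C + \<gamma> * tstar)))) has_integral I / \<gamma>) {tstar..t2}"
    using has_integral_affinity_iff[of \<gamma> "\<lambda>w. f (- w)" "- (C + \<gamma> * tstar)" I "-C" "-a"] assms(2)
    by (simp add: t2_def field_simps)
  then have late: "((\<lambda>t. f (C - sched \<beta> \<gamma> tstar t)) has_integral I / \<gamma>) {tstar..t2}"
    by (rule has_integral_eq[rotated]) (auto simp: sched_def algebra_simps)
  have "t1 \<le> tstar" "tstar \<le> t2" using assms by (simp_all add: t1_def t2_def)
  from has_integral_combine[OF this early late]
  show ?thesis
  proof (rule has_integral_on_superset)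
    fix t assume "t \<notin> {t1..t2}"
    then consider "t < t1" | "t2 < t" by fastforce
    then have "C - sched \<beta> \<gamma> tstar t < a"
    proof cases
      case 1
      then have "(C - a) / \<beta> < tstar - t" by (simp add: t1_def)
      then have "C - a < \<beta> * (tstar - t)"
        using assms by (simp add: pos_divide_less_eq mult.commute)
      moreover have "t \<le> tstar" using 1 \<open>t1 \<le> tstar\<close> by simp
      ultimately show ?thesis by (simp add: sched_def)
    next
      case 2
      then have "(C - a) / \<gamma> < t - tstar" by (simp add: t2_def)
      then have "C - a < \<gamma> * (t - tstar)"
        using assms by (simp add: pos_divide_less_eq mult.commute)
      moreover have "\<not> t \<le> tstar" using 2 \<open>tstar \<le> t2\<close> by simp
      ultimately show ?thesis by (simp add: sched_def)
    qed
    then show "f (C - sched \<beta> \<gamma> tstar t) = 0" by (rule f0)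
  qed simp
qed

theorem lemma1:
  fixes L vf nj \<alpha> \<beta> \<gamma> tstar Ns C :: real and n :: "real \<Rightarrow> real"
  assumes "L > 0" "vf > 0" "nj > 0" "\<alpha> > 0" "\<beta> > 0" "\<gamma> > 0" "Ns > 0"
    and "short_run_equilibrium L vf nj \<alpha> \<beta> \<gamma> tstar Ns n C"
  shows "Ns - \<alpha> * nj * (1 / \<beta> + 1 / \<gamma>) *
           (ln (C * vf / (\<alpha> * L)) + 1 / (C * vf / (\<alpha> * L)) - 1) = 0
         \<and> (C * vf / (\<alpha> * L) > 2 \<longrightarrow> hypercongestion nj n)"
proof -
  define a K where "a = \<alpha> * L / vf" and "K = nj * vf / L"
  define w where "w t = C - sched \<beta> \<gamma> tstar t" for t
  have a: "0 < a" and theta: "C * vf / (\<alpha> * L) = C / a" and Ka: "K * a = \<alpha> * nj"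
    using assms(1-4) by (simp_all add: a_def K_def)
  have acc: "n t = accumulation_of_cost a nj (w t)" for t
    unfolding a_def w_def using assms
    by (intro accumulation_eq_accumulation_of_cost)
       (auto simp: short_run_equilibrium_def bathtub_cost_def algebra_simps)
  have flow: "((\<lambda>t. outflow_of_cost a K (w t)) has_integral Ns) UNIV"
    using assms(8) assms(3) unfolding short_run_equilibrium_def K_def acc
    by (simp add: outflow_accumulation_of_cost)
  have w_le: "w t \<le> C" for t
    using assms(5,6) by (simp add: w_def sched_def)
  have "a < C"
  proof (rule ccontr)
    assume "\<not> a < C"
    with w_le have "outflow_of_cost a K (w t) = 0" for t
      by (meson not_less order_trans outflow_of_cost_eq_0)
    with flow have "Ns = 0" by (simp add: has_integral_0_eq)
    with assms(7) show False by simp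
  qed
  define I where "I = K * a * (ln (C / a) + a / C - 1)"
  have "((\<lambda>t. outflow_of_cost a K (w t)) has_integral I / \<beta> + I / \<gamma>) UNIV"
    unfolding w_def I_def using \<open>a < C\<close>
    by (intro has_integral_comp_sched[where a = a] has_integral_outflow_of_cost assms(5,6) a)
       (auto simp: outflow_of_cost_def)
  then have "Ns = \<alpha> * nj * (1 / \<beta> + 1 / \<gamma>) * (ln (C / a) + 1 / (C / a) - 1)"
    using has_integral_unique[OF flow] Ka a by (simp add: I_def field_simps)
  moreover have "hypercongestion nj n" if "C / a > 2"
  proof -
    have "n tstar = nj * (1 - a / C)"
      using acc[of tstar] \<open>a < C\<close> by (simp add: w_def sched_def accumulation_of_cost_def)
    moreover have "a / C < 1 / 2" using that a by (simp add: field_simps)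
    ultimately show ?thesis
      using assms(3) unfolding hypercongestion_def by (auto intro!: exI[of _ tstar])
  qed
  ultimately show ?thesis unfolding theta by simp
qed

end
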